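(* Consider optimal control problem OCP-1 (described in the context). The optimal control $u_*^1$ (given pointwise by maximization of the Hamiltonian along the optimal trajectory and adjoint function) is a continuous function on the interval $[0,T]$.
   Context: Parameters: $\beta_1,\beta_2,\gamma,\rho_1,\rho_2>0$; $\sigma_1,\sigma_2>0$ with $\sigma_1+\sigma_2=1$; $0\le u_{\max}<1$; weights $\alpha_1,\alpha_2\ge0$, $\alpha_3>0$; horizon $T>0$; initial values $s_0,e_0,i_0,j_0>0$ with $s_0+e_0+i_0+j_0\le 1$. The admissible controls are all Lebesgue measurable $u:[0,T]\to[0,u_{\max}]$. The state system is $s'=-s(\beta_1(1-u)^2i+\beta_2(1-u)j)$, $e'=s(\beta_1(1-u)^2i+\beta_2(1-u)j)-\gamma e$, $i'=\sigma_1\gamma e-\rho_1 i$, $j'=\sigma_2\gamma e-\rho_2 j$, with $s(0)=s_0,e(0)=e_0,i(0)=i_0,j(0)=j_0$. OCP-1 is the problem of minimizing $Q(u)=\alpha_1(e(T)+i(T)+j(T))+\alpha_2\int_0^T(e+i+j)\,dt+0.5\alpha_3\int_0^Tu^2\,dt$ over admissible controls. Its Hamiltonian is $H(s,e,i,j,\psi_1,\dots,\psi_4,u)=-s(\beta_1(1-u)^2i+\beta_2(1-u)j)(\psi_1-\psi_2)-\gamma e(\psi_2-\sigma_1\psi_3-\sigma_2\psi_4)-\rho_1 i\psi_3-\rho_2 j\psi_4-\alpha_2(e+i+j)-0.5\alpha_3u^2$. For an optimal control $u_*^1$ with optimal trajectory $(s_*^1,e_*^1,i_*^1,j_*^1)$,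 the adjoint function $\psi_*=(\psi_1^*,\dots,\psi_4^* )$ of the Pontryagin maximum principle is a nontrivial solution of $\psi_1'=(\beta_1(1-u_*^1)^2i_*^1+\beta_2(1-u_*^1)j_*^1)(\psi_1-\psi_2)$, $\psi_2'=\gamma(\psi_2-\sigma_1\psi_3-\sigma_2\psi_4)+\alpha_2$, $\psi_3'=\beta_1(1-u_*^1)^2s_*^1(\psi_1-\psi_2)+\rho_1\psi_3+\alpha_2$, $\psi_4'=\beta_2(1-u_*^1)s_*^1(\psi_1-\psi_2)+\rho_2\psi_4+\alpha_2$, with $\psi_1(T)=0$, $\psi_2(T)=\psi_3(T)=\psi_4(T)=-\alpha_1$, and $u_*^1(t)$ maximizes $H(s_*^1(t),e_*^1(t),i_*^1(t),j_*^1(t),\psi_*(t),u)$ over $u\in[0,u_{\max}]$. *)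

theory Defs
  imports "HOL-Analysis.Analysis"
begin

definition admissible :: "real \<Rightarrow> real \<Rightarrow> (real \<Rightarrow> real) \<Rightarrow> bool" where
  "admissible umax T u \<longleftrightarrow>
     u \<in> borel_measurable (lebesgue_on {0..T}) \<and> (\<forall>t\<in>{0..T}. 0 \<le> u t \<and> u t \<le> umax)"

definition incid :: "real \<Rightarrow> real \<Rightarrow> real \<Rightarrow> real \<Rightarrow> real \<Rightarrow> real \<Rightarrow> real" where
  "incid b1 b2 u s i j = s * (b1 * (1 - u)^2 * i + b2 * (1 - u) * j)"

text \<open>(s,e,i,j) is a (Caratheodory) solution of the state system on [0,T] for control u,
  written in integral form.\<close>
definition state_sol ::
  "real \<Rightarrow> real \<Rightarrow> real \<Rightarrow> real \<Rightarrow> real \<Rightarrow> real \<Rightarrow> real \<Rightarrow> real \<Rightarrow>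
   real \<Rightarrow> real \<Rightarrow> real \<Rightarrow> real \<Rightarrow>
   (real \<Rightarrow> real) \<Rightarrow> (real \<Rightarrow> real) \<Rightarrow> (real \<Rightarrow> real) \<Rightarrow> (real \<Rightarrow> real) \<Rightarrow> (real \<Rightarrow> real) \<Rightarrow> bool" where
  "state_sol b1 b2 g sg1 sg2 r1 r2 T s0 e0 i0 j0 u s e i j \<longleftrightarrow>
     (\<forall>t\<in>{0..T}.
        ((\<lambda>\<tau>. - incid b1 b2 (u \<tau>) (s \<tau>) (i \<tau>) (j \<tau>)) has_integral (s t - s0)) {0..t} \<and>
        ((\<lambda>\<tau>. incid b1 b2 (u \<tau>) (s \<tau>) (i \<tau>) (j \<tau>) - g * e \<tau>) has_integral (e t - e0)) {0..t} \<and>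
        ((\<lambda>\<tau>. sg1 * g * e \<tau> - r1 * i \<tau>) has_integral (i t - i0)) {0..t} \<and>
        ((\<lambda>\<tau>. sg2 * g * e \<tau> - r2 * j \<tau>) has_integral (j t - j0)) {0..t})"

definition cost :: "real \<Rightarrow> real \<Rightarrow> real \<Rightarrow> real \<Rightarrow>
   (real \<Rightarrow> real) \<Rightarrow> (real \<Rightarrow> real) \<Rightarrow> (real \<Rightarrow> real) \<Rightarrow> (real \<Rightarrow> real) \<Rightarrow> real" where
  "cost a1 a2 a3 T u e i j =
     a1 * (e T + i T + j T) + a2 * integral {0..T} (\<lambda>t. e t + i t + j t)
     + 0.5 * a3 * integral {0..T} (\<lambda>t. (u t)^2)"

definition hamiltonian ::
  "real \<Rightarrow> real \<Rightarrow> real \<Rightarrow> real \<Rightarrow> real \<Rightarrow> real \<Rightarrow> real \<Rightarrow> real \<Rightarrow> real \<Rightarrow>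
   real \<Rightarrow> real \<Rightarrow> real \<Rightarrow> real \<Rightarrow> real \<Rightarrow> real \<Rightarrow> real \<Rightarrow> real \<Rightarrow> real \<Rightarrow> real" where
  "hamiltonian b1 b2 g sg1 sg2 r1 r2 a2 a3 s e i j p1 p2 p3 p4 u =
     - incid b1 b2 u s i j * (p1 - p2) - g * e * (p2 - sg1 * p3 - sg2 * p4)
     - r1 * i * p3 - r2 * j * p4 - a2 * (e + i + j) - 0.5 * a3 * u^2"

definition adjoint_sol ::
  "real \<Rightarrow> real \<Rightarrow> real \<Rightarrow> real \<Rightarrow> real \<Rightarrow> real \<Rightarrow> real \<Rightarrow> real \<Rightarrow> real \<Rightarrow> real \<Rightarrow>
   (real \<Rightarrow> real) \<Rightarrow> (real \<Rightarrow> real) \<Rightarrow> (real \<Rightarrow> real) \<Rightarrow> (real \<Rightarrow> real) \<Rightarrow>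
   (real \<Rightarrow> real) \<Rightarrow> (real \<Rightarrow> real) \<Rightarrow> (real \<Rightarrow> real) \<Rightarrow> (real \<Rightarrow> real) \<Rightarrow> bool" where
  "adjoint_sol b1 b2 g sg1 sg2 r1 r2 a1 a2 T u s i j p1 p2 p3 p4 \<longleftrightarrow>
     p1 T = 0 \<and> p2 T = - a1 \<and> p3 T = - a1 \<and> p4 T = - a1 \<and>
     (\<forall>t\<in>{0..T}.
        ((\<lambda>\<tau>. (b1 * (1 - u \<tau>)^2 * i \<tau> + b2 * (1 - u \<tau>) * j \<tau>) * (p1 \<tau> - p2 \<tau>))
            has_integral (p1 T - p1 t)) {t..T} \<and>
        ((\<lambda>\<tau>. g * (p2 \<tau> - sg1 * p3 \<tau> - sg2 * p4 \<tau>) + a2)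
            has_integral (p2 T - p2 t)) {t..T} \<and>
        ((\<lambda>\<tau>. b1 * (1 - u \<tau>)^2 * s \<tau> * (p1 \<tau> - p2 \<tau>) + r1 * p3 \<tau> + a2)
            has_integral (p3 T - p3 t)) {t..T} \<and>
        ((\<lambda>\<tau>. b2 * (1 - u \<tau>) * s \<tau> * (p1 \<tau> - p2 \<tau>) + r2 * p4 \<tau> + a2)
            has_integral (p4 T - p4 t)) {t..T})"

end

theory Submission
  imports Defs
begin

(* The Hamiltonian depends on the control only through
     h(u) = - s (psi1 - psi2) (beta1 (1 - u)^2 i + beta2 (1 - u) j) - alpha3 u^2 / 2.
   Along the trajectory i and j are nonnegative: the state stays positive, since at a first time
   where a component vanished, a Gronwall-type estimate on a short final interval would give a
   contradiction. Hence h has a unique maximizer on [0, umax]: it is strictly concave when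
   s (psi1 - psi2) >= 0 and strictly decreasing on [0, 1] otherwise. State and adjoint are
   indefinite integrals, hence continuous, so h depends jointly continuously on t and u; and the
   unique maximizer of a jointly continuous function over a compact set depends continuously on
   the parameter, because its graph is closed. *)

lemma integral_equation_increment:
  fixes f x :: "real \<Rightarrow> 'a::banach"
  assumes h: "\<forall>t\<in>{0..T}. (f has_integral (x t - x0)) {0..t}"
    and "0 \<le> t" "t \<le> t'" "t' \<le> T"
  shows "(f has_integral (x t' - x t)) {t..t'}"
proof -
  have h1: "(f has_integral (x t' - x0)) {0..t'}" and h2: "(f has_integral (x t - x0)) {0..t}"
    using h assms(2-4) by auto
  have int: "f integrable_on {0..t'}"
    using h1 by (rule has_integral_integrable)
  have "integral {0..t} f + integral {t..t'} f = integral {0..t'} f"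
    using Henstock_Kurzweil_Integration.integral_combine[OF assms(2,3) int] by simp
  then have "integral {t..t'} f = x t' - x t"
    using integral_unique[OF h1] integral_unique[OF h2] by (simp add: algebra_simps)
  moreover have "f integrable_on {t..t'}"
    using integrable_subinterval_real[OF int] assms(2) by simp
  ultimately show ?thesis
    using has_integral_integral by metis
qed

lemma integral_equation_initial_value:
  fixes f x :: "real \<Rightarrow> 'a::banach"
  assumes "\<forall>t\<in>{0..T}. (f has_integral (x t - x0)) {0..t}" "0 \<le> T"
  shows "x 0 = x0"
proof -
  have "(f has_integral (x 0 - x0)) {0..0}"
    by (rule bspec[OF assms(1)]) (use assms(2) in simp)
  then show ?thesis
    using has_integral_unique[OF _ has_integral_refl(2)] by force
qed

lemma integral_equation_continuous:
  fixes f x :: "real \<Rightarrow> 'a::banach"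
  assumes h: "\<forall>t\<in>{0..T}. (f has_integral (x t - x0)) {0..t}" and "0 \<le> T"
  shows "continuous_on {0..T} x"
proof (rule continuous_on_eq)
  have "f integrable_on {0..T}"
    using h \<open>0 \<le> T\<close> by auto
  then show "continuous_on {0..T} (\<lambda>t. x0 + integral {0..t} f)"
    by (intro continuous_intros indefinite_integral_continuous_1)
  show "x0 + integral {0..t} f = x t" if "t \<in> {0..T}" for t
    using integral_unique[OF bspec[OF h that]] by simp
qed

lemma backward_integral_equation_continuous:
  fixes f x :: "real \<Rightarrow> 'a::banach"
  assumes h: "\<forall>t\<in>{0..T}. (f has_integral (x T - x t)) {t..T}" and "0 \<le> T"
  shows "continuous_on {0..T} x"
proof (rule continuous_on_eq)
  have "f integrable_on {0..T}"
    using h \<open>0 \<le> T\<close> by auto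
  then show "continuous_on {0..T} (\<lambda>t. x T - integral {t..T} f)"
    by (intro continuous_intros indefinite_integral_continuous_1')
  show "x T - integral {t..T} f = x t" if "t \<in> {0..T}" for t
    using integral_unique[OF bspec[OF h that]] by simp
qed

lemma positive_endpoint_of_backward_bound:
  fixes x :: "real \<Rightarrow> real"
  assumes "a < b" and cont: "continuous_on {a..b} x" and pos: "\<forall>t\<in>{a..<b}. x t > 0"
    and "c \<ge> 0" and bound: "\<forall>t\<in>{a..b}. x t \<le> x b + c * integral {t..b} x"
  shows "x b > 0"
proof (rule ccontr)
  assume "\<not> x b > 0"
  define t0 where "t0 = max a (b - 1 / (2 * c + 2))"
  have t0: "a \<le> t0" "t0 < b"
    using \<open>a < b\<close> \<open>c \<ge> 0\<close> unfolding t0_def by auto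
  have short: "c * (b - t0) < 1"
  proof -
    have "c * (b - t0) \<le> c * (1 / (2 * c + 2))"
      using \<open>c \<ge> 0\<close> unfolding t0_def by (intro mult_left_mono) auto
    also have "\<dots> < 1"
      using \<open>c \<ge> 0\<close> by (simp add: field_simps)
    finally show ?thesis .
  qed
  have cont0: "continuous_on {t0..b} x"
    using continuous_on_subset[OF cont] t0 by auto
  \<comment> \<open>at a maximum point \<open>\<tau>\<close> of \<open>x\<close> on \<open>{t0..b}\<close> the bound gives \<open>x \<tau> \<le> c (b - t0) x \<tau> < x \<tau>\<close>\<close>
  obtain \<tau> where \<tau>: "\<tau> \<in> {t0..b}" and max: "\<forall>y\<in>{t0..b}. x y \<le> x \<tau>"
    using continuous_attains_sup[OF compact_Icc _ cont0] t0 by auto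
  have "x t0 > 0" "x t0 \<le> x \<tau>"
    using max pos t0 by auto
  then have "x \<tau> > 0"
    by linarith
  have "x integrable_on {\<tau>..b}"
    using \<tau> by (intro integrable_continuous_interval continuous_on_subset[OF cont0]) auto
  then have "integral {\<tau>..b} x \<le> integral {\<tau>..b} (\<lambda>_. x \<tau>)"
    using \<tau> max by (intro integral_le) auto
  also have "\<dots> \<le> (b - t0) * x \<tau>"
    using \<tau> \<open>x \<tau> > 0\<close> by (simp add: mult_right_mono)
  finally have "c * integral {\<tau>..b} x \<le> c * ((b - t0) * x \<tau>)"
    using \<open>c \<ge> 0\<close> by (rule mult_left_mono)
  moreover have "x \<tau> \<le> x b + c * integral {\<tau>..b} x"
    using bound \<tau> t0 by auto
  moreover have "c * ((b - t0) * x \<tau>) < x \<tau>"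
    using mult_strict_right_mono[OF short \<open>x \<tau> > 0\<close>] by (simp add: mult.assoc)
  ultimately show False
    using \<open>\<not> x b > 0\<close> by linarith
qed

lemma integral_equation_positive_endpoint:
  fixes f x :: "real \<Rightarrow> real"
  assumes h: "\<forall>t\<in>{0..T}. (f has_integral (x t - x0)) {0..t}"
    and "0 < b" "b \<le> T" and pos: "\<forall>t\<in>{0..<b}. x t > 0"
    and "c \<ge> 0" and growth: "\<forall>\<tau>\<in>{0..b}. f \<tau> + c * x \<tau> \<ge> 0"
  shows "x b > 0"
proof -
  have cont: "continuous_on {0..b} x"
    using integral_equation_continuous[OF h] continuous_on_subset \<open>0 < b\<close> \<open>b \<le> T\<close> by fastforce
  have "x t \<le> x b + c * integral {t..b} x" if t: "t \<in> {0..b}" for t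
  proof -
    have "(f has_integral (x b - x t)) {t..b}"
      using integral_equation_increment[OF h] t \<open>b \<le> T\<close> by simp
    moreover have "((\<lambda>\<tau>. c * x \<tau>) has_integral (c * integral {t..b} x)) {t..b}"
      using t by (intro has_integral_mult_right integrable_integral integrable_continuous_interval
          continuous_on_subset[OF cont]) auto
    ultimately have "((\<lambda>\<tau>. f \<tau> + c * x \<tau>) has_integral (x b - x t + c * integral {t..b} x)) {t..b}"
      by (rule has_integral_add)
    then have "0 \<le> x b - x t + c * integral {t..b} x"
      by (rule has_integral_nonneg) (use growth t in auto)
    then show ?thesis
      by simp
  qed
  then show ?thesis
    using positive_endpoint_of_backward_bound[OF \<open>0 < b\<close> cont pos \<open>c \<ge> 0\<close>] by blast
qed

lemma positive_on_interval_by_continuity: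
  fixes \<phi> :: "real \<Rightarrow> real"
  assumes cont: "continuous_on {0..T} \<phi>" and "\<phi> 0 > 0"
    and step: "\<And>b. 0 < b \<Longrightarrow> b \<le> T \<Longrightarrow> \<forall>t\<in>{0..<b}. \<phi> t > 0 \<Longrightarrow> \<forall>t\<in>{0..b}. \<phi> t \<ge> 0
                 \<Longrightarrow> \<phi> b > 0"
  shows "\<forall>t\<in>{0..T}. \<phi> t > 0"
proof (rule ccontr)
  define Z where "Z = {0..T} \<inter> \<phi> -` {..0}"
  assume "\<not> (\<forall>t\<in>{0..T}. \<phi> t > 0)"
  then have "Z \<noteq> {}"
    unfolding Z_def by force
  moreover have "compact Z"
    unfolding Z_def compact_eq_bounded_closed
    using cont by (auto intro: continuous_closed_preimage bounded_Int)
  ultimately obtain b where "b \<in> Z" and first: "\<forall>t\<in>Z. b \<le> t"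
    using compact_attains_inf by blast
  then have b: "0 \<le> b" "b \<le> T" "\<phi> b \<le> 0"
    unfolding Z_def by auto
  with \<open>\<phi> 0 > 0\<close> have "0 < b"
    by (cases "b = 0") auto
  have before: "\<forall>t\<in>{0..<b}. \<phi> t > 0"
    using first b unfolding Z_def by force
  have closure: "closure {0..<b} = {0..b}"
    using \<open>0 < b\<close> by simp
  have "\<phi> b \<ge> 0"
    using continuous_ge_on_closure[of "{0..<b}" \<phi> b 0] continuous_on_subset[OF cont] before b
    unfolding closure by (auto simp: less_imp_le)
  then have "\<forall>t\<in>{0..b}. \<phi> t \<ge> 0"
    using before by (metis atLeastAtMost_iff atLeastLessThan_iff less_eq_real_def)
  then have "\<phi> b > 0"
    using step[OF \<open>0 < b\<close> b(2) before] by blast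
  with b show False
    by simp
qed

lemma continuous_on_unique_maximizer:
  fixes F :: "'a::euclidean_space \<Rightarrow> 'b::euclidean_space \<Rightarrow> real" and u :: "'a \<Rightarrow> 'b"
  assumes "compact S" "compact K"
    and contF: "continuous_on (S \<times> K) (\<lambda>p. F (fst p) (snd p))"
    and u: "\<And>t. t \<in> S \<Longrightarrow> u t \<in> K \<and> (\<forall>w\<in>K. F t w \<le> F t (u t))"
    and unique: "\<And>t v w. t \<in> S \<Longrightarrow> v \<in> K \<Longrightarrow> w \<in> K \<Longrightarrow> \<forall>z\<in>K. F t z \<le> F t v
                   \<Longrightarrow> \<forall>z\<in>K. F t z \<le> F t w \<Longrightarrow> v = w"
  shows "continuous_on S u"
proof (rule continuous_from_closed_graph[OF \<open>compact K\<close>])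
  show "u \<in> S \<rightarrow> K"
    using u by blast
  have "continuous_on (S \<times> K) (\<lambda>p. F (fst p) (snd p) - F (fst p) w)" if "w \<in> K" for w
  proof -
    have "continuous_on (S \<times> K) (\<lambda>p. (fst p, w))"
      by (intro continuous_intros)
    then have "continuous_on (S \<times> K) (\<lambda>p. F (fst p) w)"
      using continuous_on_compose2[OF contF] that by force
    then show ?thesis
      using contF by (rule continuous_on_diff[rotated])
  qed
  then have "closed ((S \<times> K) \<inter> (\<Inter>w\<in>K. (S \<times> K) \<inter> (\<lambda>p. F (fst p) (snd p) - F (fst p) w) -` {0..}))"
    using assms(1,2) by (intro closed_Int closed_INT ballI continuous_closed_preimage)
      (auto intro: compact_imp_closed compact_Times)
  also have "(S \<times> K) \<inter> (\<Inter>w\<in>K. (S \<times> K) \<inter> (\<lambda>p. F (fst p) (snd p) - F (fst p) w) -` {0..})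
      = {(t, v). t \<in> S \<and> v \<in> K \<and> (\<forall>w\<in>K. F t w \<le> F t v)}"
    by auto
  also have "\<dots> = (\<lambda>t. (t, u t)) ` S"
  proof (intro equalityI subsetI)
    fix p assume "p \<in> {(t, v). t \<in> S \<and> v \<in> K \<and> (\<forall>w\<in>K. F t w \<le> F t v)}"
    then obtain t v where "p = (t, v)" "t \<in> S" "v \<in> K" "\<forall>w\<in>K. F t w \<le> F t v"
      by blast
    with u[of t] unique[of t v "u t"] show "p \<in> (\<lambda>t. (t, u t)) ` S"
      by auto
  qed (use u in auto)
  finally show "closed ((\<lambda>t. (t, u t)) ` S)" .
qed

definition control_hamiltonian :: "real \<Rightarrow> real \<Rightarrow> real \<Rightarrow> real \<Rightarrow> real \<Rightarrow> real \<Rightarrow> real \<Rightarrow> real \<Rightarrow> real" where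
  "control_hamiltonian b1 b2 a3 s i j d v = - incid b1 b2 v s i j * d - 0.5 * a3 * v^2"

lemma hamiltonian_le_iff_control_hamiltonian_le:
  "hamiltonian b1 b2 g sg1 sg2 r1 r2 a2 a3 s e i j p1 p2 p3 p4 v
     \<le> hamiltonian b1 b2 g sg1 sg2 r1 r2 a2 a3 s e i j p1 p2 p3 p4 w
   \<longleftrightarrow> control_hamiltonian b1 b2 a3 s i j (p1 - p2) v \<le> control_hamiltonian b1 b2 a3 s i j (p1 - p2) w"
  unfolding hamiltonian_def control_hamiltonian_def by (simp add: algebra_simps)

lemma control_hamiltonian_midpoint:
  "control_hamiltonian b1 b2 a3 s i j d ((v + w) / 2)
     - (control_hamiltonian b1 b2 a3 s i j d v + control_hamiltonian b1 b2 a3 s i j d w) / 2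
   = (s * d * b1 * i + a3 / 2) * (v - w)^2 / 4"
  unfolding control_hamiltonian_def incid_def by (simp add: field_simps power2_eq_square)

lemma control_hamiltonian_strict_antimono:
  assumes "b1 \<ge> 0" "b2 \<ge> 0" "a3 > 0" "i \<ge> 0" "j \<ge> 0" "s * d < 0"
    and "0 \<le> v" "v < w" "w \<le> 1"
  shows "control_hamiltonian b1 b2 a3 s i j d w < control_hamiltonian b1 b2 a3 s i j d v"
proof -
  have "control_hamiltonian b1 b2 a3 s i j d v - control_hamiltonian b1 b2 a3 s i j d w
      = (- (s * d)) * (b1 * i * ((w - v) * (2 - v - w)) + b2 * j * (w - v)) + a3 / 2 * ((w - v) * (w + v))"
    unfolding control_hamiltonian_def incid_def by (simp add: field_simps power2_eq_square)
  moreover have "0 \<le> (- (s * d)) * (b1 * i * ((w - v) * (2 - v - w)) + b2 * j * (w - v))"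
    using assms by (intro mult_nonneg_nonneg add_nonneg_nonneg) auto
  moreover have "0 < a3 / 2 * ((w - v) * (w + v))"
    using assms by simp
  ultimately show ?thesis
    by linarith
qed

lemma control_hamiltonian_unique_maximizer:
  assumes "b1 \<ge> 0" "b2 \<ge> 0" "a3 > 0" "i \<ge> 0" "j \<ge> 0" "umax \<le> 1"
    and v: "v \<in> {0..umax}" and w: "w \<in> {0..umax}"
    and max_v: "\<forall>z\<in>{0..umax}. control_hamiltonian b1 b2 a3 s i j d z \<le> control_hamiltonian b1 b2 a3 s i j d v"
    and max_w: "\<forall>z\<in>{0..umax}. control_hamiltonian b1 b2 a3 s i j d z \<le> control_hamiltonian b1 b2 a3 s i j d w"
  shows "v = w"
proof (rule ccontr)
  let ?H = "control_hamiltonian b1 b2 a3 s i j d"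
  assume "v \<noteq> w"
  have "?H v = ?H w"
    using max_v max_w v w by (meson order_antisym)
  show False
  proof (cases "s * d \<ge> 0")
    case True
    \<comment> \<open>\<open>?H\<close> is strictly concave, so the midpoint would beat both maximizers\<close>
    have "0 < (s * d * b1 * i + a3 / 2) * (v - w)^2 / 4"
      using True assms \<open>v \<noteq> w\<close> by (intro divide_pos_pos mult_pos_pos add_nonneg_pos) auto
    then have "?H ((v + w) / 2) - (?H v + ?H w) / 2 > 0"
      by (simp only: control_hamiltonian_midpoint)
    then have "?H v < ?H ((v + w) / 2)"
      using \<open>?H v = ?H w\<close> by (simp add: field_simps)
    moreover have "(v + w) / 2 \<in> {0..umax}"
      using v w by auto
    ultimately show False
      using max_v by fastforce
  next
    case False
    then have "?H v \<noteq> ?H w"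
      using control_hamiltonian_strict_antimono[of b1 b2 a3 i j s d] assms v w \<open>v \<noteq> w\<close>
      by (cases "v < w") (auto simp: linorder_neq_iff dest: sym)
    then show False
      using \<open>?H v = ?H w\<close> by simp
  qed
qed

lemma state_sol_continuous:
  assumes "state_sol b1 b2 g sg1 sg2 r1 r2 T s0 e0 i0 j0 u s e i j" "0 \<le> T"
  shows "continuous_on {0..T} s" "continuous_on {0..T} e"
    "continuous_on {0..T} i" "continuous_on {0..T} j"
  using assms unfolding state_sol_def by (blast intro: integral_equation_continuous)+

lemma state_sol_initial_values:
  assumes "state_sol b1 b2 g sg1 sg2 r1 r2 T s0 e0 i0 j0 u s e i j" "0 \<le> T"
  shows "s 0 = s0" "e 0 = e0" "i 0 = i0" "j 0 = j0"
  using assms unfolding state_sol_def by (blast intro: integral_equation_initial_value)+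

lemma adjoint_sol_continuous:
  assumes "adjoint_sol b1 b2 g sg1 sg2 r1 r2 a1 a2 T u s i j p1 p2 p3 p4" "0 \<le> T"
  shows "continuous_on {0..T} p1" "continuous_on {0..T} p2"
    "continuous_on {0..T} p3" "continuous_on {0..T} p4"
  using assms unfolding adjoint_sol_def by (blast intro: backward_integral_equation_continuous)+

lemma incid_bounds:
  assumes "b1 \<ge> 0" "b2 \<ge> 0" "0 \<le> v" "v \<le> 1" "0 \<le> s"
    and "0 \<le> i" "i \<le> I" "0 \<le> j" "j \<le> J"
  shows "0 \<le> incid b1 b2 v s i j" "incid b1 b2 v s i j \<le> (b1 * I + b2 * J) * s"
proof -
  have "(1 - v)^2 \<le> 1"
    using assms by (intro power_le_one) auto
  then have "(1 - v)^2 * i \<le> I" "(1 - v) * j \<le> J"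
    using mult_left_le_one_le[of i "(1 - v)^2"] mult_left_le_one_le[of j "1 - v"] assms by auto
  then have "b1 * (1 - v)^2 * i + b2 * (1 - v) * j \<le> b1 * I + b2 * J"
    using assms by (simp add: add_mono mult.assoc mult_left_mono)
  then show "incid b1 b2 v s i j \<le> (b1 * I + b2 * J) * s"
    unfolding incid_def using \<open>0 \<le> s\<close> by (simp add: mult.commute mult_left_mono)
  show "0 \<le> incid b1 b2 v s i j"
    unfolding incid_def using assms by simp
qed

lemma state_sol_positive_endpoint:
  assumes par: "b1 \<ge> 0" "b2 \<ge> 0" "g \<ge> 0" "r1 \<ge> 0" "r2 \<ge> 0" "sg1 \<ge> 0" "sg2 \<ge> 0"
    and "umax \<le> 1" and adm: "admissible umax T u"
    and sol: "state_sol b1 b2 g sg1 sg2 r1 r2 T s0 e0 i0 j0 u s e i j"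
    and b: "0 < b" "b \<le> T"
    and pos: "\<forall>t\<in>{0..<b}. s t > 0 \<and> e t > 0 \<and> i t > 0 \<and> j t > 0"
    and nonneg: "\<forall>t\<in>{0..b}. s t \<ge> 0 \<and> e t \<ge> 0 \<and> i t \<ge> 0 \<and> j t \<ge> 0"
    and bounds: "\<forall>t\<in>{0..b}. i t \<le> I \<and> j t \<le> J"
  shows "s b > 0 \<and> e b > 0 \<and> i b > 0 \<and> j b > 0"
proof -
  define K where "K = b1 * I + b2 * J"
  have "I \<ge> 0" "J \<ge> 0"
    using bspec[OF bounds, of 0] bspec[OF nonneg, of 0] \<open>0 < b\<close> by auto
  then have "K \<ge> 0"
    using par unfolding K_def by simp
  have inc: "0 \<le> incid b1 b2 (u \<tau>) (s \<tau>) (i \<tau>) (j \<tau>)"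
    "incid b1 b2 (u \<tau>) (s \<tau>) (i \<tau>) (j \<tau>) \<le> K * s \<tau>"
    if "\<tau> \<in> {0..b}" for \<tau>
  proof -
    have "0 \<le> u \<tau> \<and> u \<tau> \<le> umax"
      using adm that b unfolding admissible_def by auto
    then show "0 \<le> incid b1 b2 (u \<tau>) (s \<tau>) (i \<tau>) (j \<tau>)"
      "incid b1 b2 (u \<tau>) (s \<tau>) (i \<tau>) (j \<tau>) \<le> K * s \<tau>"
      using incid_bounds[of b1 b2 "u \<tau>" "s \<tau>" "i \<tau>" I "j \<tau>" J] par \<open>umax \<le> 1\<close>
        bspec[OF nonneg that] bspec[OF bounds that] unfolding K_def by auto
  qed
  note eqs = sol[unfolded state_sol_def]
  have "s b > 0"
    by (rule integral_equation_positive_endpoint[where c = K])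
      (use eqs b pos \<open>K \<ge> 0\<close> inc in auto)
  moreover have "e b > 0"
    by (rule integral_equation_positive_endpoint[where c = g])
      (use eqs b pos par inc in auto)
  moreover have "i b > 0"
    by (rule integral_equation_positive_endpoint[where c = r1])
      (use eqs b pos par nonneg in auto)
  moreover have "j b > 0"
    by (rule integral_equation_positive_endpoint[where c = r2])
      (use eqs b pos par nonneg in auto)
  ultimately show ?thesis
    by simp
qed

lemma state_sol_positive:
  assumes par: "b1 \<ge> 0" "b2 \<ge> 0" "g \<ge> 0" "r1 \<ge> 0" "r2 \<ge> 0" "sg1 \<ge> 0" "sg2 \<ge> 0"
    and "umax \<le> 1" "0 \<le> T"
    and ini: "s0 > 0" "e0 > 0" "i0 > 0" "j0 > 0"
    and adm: "admissible umax T u"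
    and sol: "state_sol b1 b2 g sg1 sg2 r1 r2 T s0 e0 i0 j0 u s e i j"
  shows "\<forall>t\<in>{0..T}. s t > 0 \<and> e t > 0 \<and> i t > 0 \<and> j t > 0"
proof -
  note cont = state_sol_continuous[OF sol \<open>0 \<le> T\<close>]
  obtain I where I: "\<And>t. t \<in> {0..T} \<Longrightarrow> \<bar>i t\<bar> \<le> I"
    using continuous_on_compact_bound[OF compact_Icc cont(3)] by auto
  obtain J where J: "\<And>t. t \<in> {0..T} \<Longrightarrow> \<bar>j t\<bar> \<le> J"
    using continuous_on_compact_bound[OF compact_Icc cont(4)] by auto
  define \<phi> where "\<phi> t = min (min (s t) (e t)) (min (i t) (j t))" for t
  have "\<forall>t\<in>{0..T}. \<phi> t > 0"
  proof (rule positive_on_interval_by_continuity)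
    show "continuous_on {0..T} \<phi>"
      unfolding \<phi>_def using cont by (intro continuous_intros)
    show "\<phi> 0 > 0"
      unfolding \<phi>_def using state_sol_initial_values[OF sol \<open>0 \<le> T\<close>] ini by simp
  next
    fix b assume b: "0 < b" "b \<le> T" and "\<forall>t\<in>{0..<b}. \<phi> t > 0" "\<forall>t\<in>{0..b}. \<phi> t \<ge> 0"
    then have "\<forall>t\<in>{0..<b}. s t > 0 \<and> e t > 0 \<and> i t > 0 \<and> j t > 0"
      "\<forall>t\<in>{0..b}. s t \<ge> 0 \<and> e t \<ge> 0 \<and> i t \<ge> 0 \<and> j t \<ge> 0"
      unfolding \<phi>_def by auto
    moreover have "\<forall>t\<in>{0..b}. i t \<le> I \<and> j t \<le> J"
      using I J b by force
    ultimately show "\<phi> b > 0"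
      using state_sol_positive_endpoint[OF par \<open>umax \<le> 1\<close> adm sol b] unfolding \<phi>_def by simp
  qed
  then show ?thesis
    unfolding \<phi>_def by simp
qed

theorem lemma5:
  fixes b1 b2 g r1 r2 sg1 sg2 umax a1 a2 a3 T s0 e0 i0 j0 :: real
    and u s e i j p1 p2 p3 p4 :: "real \<Rightarrow> real"
  assumes par: "b1 > 0" "b2 > 0" "g > 0" "r1 > 0" "r2 > 0"
      and sig: "sg1 > 0" "sg2 > 0" "sg1 + sg2 = 1"
      and um: "0 \<le> umax" "umax < 1"
      and wts: "a1 \<ge> 0" "a2 \<ge> 0" "a3 > 0"
      and hor: "T > 0"
      and ini: "s0 > 0" "e0 > 0" "i0 > 0" "j0 > 0" "s0 + e0 + i0 + j0 \<le> 1"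
      and adm: "admissible umax T u"
      and sol: "state_sol b1 b2 g sg1 sg2 r1 r2 T s0 e0 i0 j0 u s e i j"
      and opt: "\<forall>v s' e' i' j'. admissible umax T v \<and>
                   state_sol b1 b2 g sg1 sg2 r1 r2 T s0 e0 i0 j0 v s' e' i' j' \<longrightarrow>
                   cost a1 a2 a3 T u e i j \<le> cost a1 a2 a3 T v e' i' j'"
      and adj: "adjoint_sol b1 b2 g sg1 sg2 r1 r2 a1 a2 T u s i j p1 p2 p3 p4"
      and nontriv: "\<exists>t\<in>{0..T}. p1 t \<noteq> 0 \<or> p2 t \<noteq> 0 \<or> p3 t \<noteq> 0 \<or> p4 t \<noteq> 0"
      and maxH: "\<forall>t\<in>{0..T}. \<forall>v\<in>{0..umax}.
                   hamiltonian b1 b2 g sg1 sg2 r1 r2 a2 a3 (s t) (e t) (i t) (j t)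
                     (p1 t) (p2 t) (p3 t) (p4 t) v
                   \<le> hamiltonian b1 b2 g sg1 sg2 r1 r2 a2 a3 (s t) (e t) (i t) (j t)
                     (p1 t) (p2 t) (p3 t) (p4 t) (u t)"
  shows "continuous_on {0..T} u"
proof -
  have "0 \<le> T"
    using hor by simp
  have pos: "\<forall>t\<in>{0..T}. s t > 0 \<and> e t > 0 \<and> i t > 0 \<and> j t > 0"
    using par sig um by (intro state_sol_positive[OF _ _ _ _ _ _ _ _ \<open>0 \<le> T\<close> ini(1-4) adm sol]) auto
  define H where "H t = control_hamiltonian b1 b2 a3 (s t) (i t) (j t) (p1 t - p2 t)" for t
  have along_fst: "continuous_on ({0..T} \<times> {0..umax}) (\<lambda>p. f (fst p))"
    if "continuous_on {0..T} f" for f :: "real \<Rightarrow> real"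
    by (rule continuous_on_compose2[OF that continuous_on_fst[OF continuous_on_id]]) auto
  show ?thesis
  proof (rule continuous_on_unique_maximizer[where F = H])
    show "continuous_on ({0..T} \<times> {0..umax}) (\<lambda>p. H (fst p) (snd p))"
      unfolding H_def control_hamiltonian_def incid_def
      using state_sol_continuous[OF sol \<open>0 \<le> T\<close>] adjoint_sol_continuous[OF adj \<open>0 \<le> T\<close>]
      by (intro continuous_intros along_fst)
    show "u t \<in> {0..umax} \<and> (\<forall>w\<in>{0..umax}. H t w \<le> H t (u t))" if "t \<in> {0..T}" for t
      using adm maxH that unfolding admissible_def H_def hamiltonian_le_iff_control_hamiltonian_le
      by simp
    show "v = w" if "t \<in> {0..T}" "v \<in> {0..umax}" "w \<in> {0..umax}"
      "\<forall>z\<in>{0..umax}. H t z \<le> H t v" "\<forall>z\<in>{0..umax}. H t z \<le> H t w" for t v w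
      using control_hamiltonian_unique_maximizer[OF _ _ _ _ _ _ that(2-5)[unfolded H_def]]
        par wts um bspec[OF pos that(1)] by simp
  qed simp_all
qed

end
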